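(* Let $H$ be the simple graph with vertex set $\{A,B,C,D,E,F,G\}$ and edge set $\{AC, AD, AE, AF, AG, BD, BE, CE, CF, CG, DE, DG, EG\}$. Then any graph containing an induced subgraph isomorphic to $H$ is not a divisor graph.
   Context: For a nonempty set $S$ of positive integers, the divisor graph $G(S)$ has vertex set $S$, with distinct $i,j$ adjacent iff $i\mid j$ or $j\mid i$. A graph is a divisor graph if it is isomorphic to $G(S)$ for some nonempty set $S$ of positive integers. *)

theory Defs
  imports Main
begin

definition simple_graph :: "'a set \<Rightarrow> ('a \<Rightarrow> 'a \<Rightarrow> bool) \<Rightarrow> bool" where
  "simple_graph V E \<longleftrightarrow> (\<forall>x y. E x y \<longrightarrow> x \<in> V \<and> y \<in> V \<and> x \<noteq> y \<and> E y x)"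

definition graph_iso :: "'a set \<Rightarrow> ('a \<Rightarrow> 'a \<Rightarrow> bool) \<Rightarrow> 'b set \<Rightarrow> ('b \<Rightarrow> 'b \<Rightarrow> bool) \<Rightarrow> bool" where
  "graph_iso V1 E1 V2 E2 \<longleftrightarrow>
     (\<exists>f. bij_betw f V1 V2 \<and> (\<forall>x\<in>V1. \<forall>y\<in>V1. E1 x y \<longleftrightarrow> E2 (f x) (f y)))"

definition div_adj :: "nat set \<Rightarrow> nat \<Rightarrow> nat \<Rightarrow> bool" where
  "div_adj S i j \<longleftrightarrow> i \<in> S \<and> j \<in> S \<and> i \<noteq> j \<and> (i dvd j \<or> j dvd i)"

definition divisor_graph :: "'a set \<Rightarrow> ('a \<Rightarrow> 'a \<Rightarrow> bool) \<Rightarrow> bool" where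
  "divisor_graph V E \<longleftrightarrow>
     (\<exists>S::nat set. S \<noteq> {} \<and> (\<forall>n\<in>S. 0 < n) \<and> graph_iso V E S (div_adj S))"

definition has_induced_copy :: "'b set \<Rightarrow> ('b \<Rightarrow> 'b \<Rightarrow> bool) \<Rightarrow> 'a set \<Rightarrow> ('a \<Rightarrow> 'a \<Rightarrow> bool) \<Rightarrow> bool" where
  "has_induced_copy V1 E1 V E \<longleftrightarrow>
     (\<exists>W. W \<subseteq> V \<and> graph_iso V1 E1 W (\<lambda>x y. x \<in> W \<and> y \<in> W \<and> E x y))"

datatype hvert = A | B | C | D | E | F | G

definition H_edges :: "(hvert \<times> hvert) set" where
  "H_edges = {(A,C), (A,D), (A,E), (A,F), (A,G), (B,D), (B,E), (C,E), (C,F), (C,G),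
               (D,E), (D,G), (E,G)}"

definition H_adj :: "hvert \<Rightarrow> hvert \<Rightarrow> bool" where
  "H_adj x y \<longleftrightarrow> (x, y) \<in> H_edges \<or> (y, x) \<in> H_edges"

end

theory Submission
  imports Defs
begin

text \<open>A divisor graph is the comparability graph of the divisibility order, so it suffices to
  show that H is not the comparability graph of any partial order. Assume it is, and say
  \<open>B \<le> D\<close> (the case \<open>D \<le> B\<close> is dual). Since A and G are comparable with D but not with B,
  both lie below D; pushing such order relations along edges whose endpoints are
  nonadjacent to a third vertex gives \<open>A \<le> F, E, G\<close> and \<open>G \<le> C\<close>, then \<open>F \<le> C\<close>, \<open>E \<le> C\<close>,
  \<open>E \<le> B\<close> and finally \<open>E \<le> A\<close>, contradicting antisymmetry.\<close>

definition comparable :: "('b \<Rightarrow> 'b \<Rightarrow> bool) \<Rightarrow> 'b \<Rightarrow> 'b \<Rightarrow> bool" where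
  "comparable le x y \<longleftrightarrow> le x y \<or> le y x"

lemma comparable_conversep [simp]: "comparable le\<inverse>\<inverse> = comparable le"
  unfolding comparable_def by blast

lemma le_of_comparable_upper:
  assumes "transp le" "le x y" "comparable le z y" "\<not> comparable le z x"
  shows "le z y"
  using assms unfolding comparable_def by (meson transpD)

lemma le_of_comparable_lower:
  assumes "transp le" "le x y" "comparable le x z" "\<not> comparable le y z"
  shows "le x z"
  using assms unfolding comparable_def by (meson transpD)

lemma H_not_comparability_graph_if_le_B_D:
  fixes le :: "'b \<Rightarrow> 'b \<Rightarrow> bool" and h :: "hvert \<Rightarrow> 'b"
  assumes trans: "transp le" and antisym: "antisymp le" and "inj h"
    and realizes: "\<And>x y. x \<noteq> y \<Longrightarrow> H_adj x y \<longleftrightarrow> comparable le (h x) (h y)"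
    and BD: "le (h B) (h D)"
  shows False
proof -
  note upper = le_of_comparable_upper[OF trans] and lower = le_of_comparable_lower[OF trans]
  note H_comparable = realizes [symmetric] H_adj_def H_edges_def
  have AD: "le (h A) (h D)" using upper[OF BD, of "h A"] by (simp add: H_comparable)
  have GD: "le (h G) (h D)" using upper[OF BD, of "h G"] by (simp add: H_comparable)
  have AF: "le (h A) (h F)" using lower[OF AD, of "h F"] by (simp add: H_comparable)
  have AE: "le (h A) (h E)" using lower[OF AF, of "h E"] by (simp add: H_comparable)
  have GC: "le (h G) (h C)" using lower[OF GD, of "h C"] by (simp add: H_comparable)
  have FC: "le (h F) (h C)" using upper[OF GC, of "h F"] by (simp add: H_comparable)
  have EC: "le (h E) (h C)" using upper[OF FC, of "h E"] by (simp add: H_comparable)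
  have EB: "le (h E) (h B)" using lower[OF EC, of "h B"] by (simp add: H_comparable)
  have EA: "le (h E) (h A)" using lower[OF EB, of "h A"] by (simp add: H_comparable)
  from AE EA antisym have "h A = h E" by (simp add: antisympD)
  with \<open>inj h\<close> show False by (simp add: inj_eq)
qed

lemma H_not_comparability_graph:
  fixes le :: "'b \<Rightarrow> 'b \<Rightarrow> bool" and h :: "hvert \<Rightarrow> 'b"
  assumes "transp le" "antisymp le" "inj h"
    and "\<And>x y. x \<noteq> y \<Longrightarrow> H_adj x y \<longleftrightarrow> comparable le (h x) (h y)"
  shows False
proof -
  have "comparable le (h B) (h D)"
    using assms(4)[of B D] by (simp add: H_adj_def H_edges_def)
  then consider "le (h B) (h D)" | "le\<inverse>\<inverse> (h B) (h D)"
    unfolding comparable_def by auto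
  then show False
    by cases (use H_not_comparability_graph_if_le_B_D[of le h]
        H_not_comparability_graph_if_le_B_D[of "le\<inverse>\<inverse>" h] assms in auto)
qed

lemma induced_copy_in_divisor_graph:
  assumes "has_induced_copy H HAdj V Adj" "divisor_graph V Adj"
  obtains h :: "'c \<Rightarrow> nat" where "inj_on h H"
    "\<And>x y. x \<in> H \<Longrightarrow> y \<in> H \<Longrightarrow> x \<noteq> y \<Longrightarrow> HAdj x y \<longleftrightarrow> comparable (dvd) (h x) (h y)"
proof -
  from assms(2) obtain S :: "nat set" and g where g: "bij_betw g V S"
    and g_adj: "\<forall>x\<in>V. \<forall>y\<in>V. Adj x y \<longleftrightarrow> div_adj S (g x) (g y)"
    unfolding divisor_graph_def graph_iso_def by blast
  from assms(1) obtain W f where "W \<subseteq> V" and f: "bij_betw f H W"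
    and f_adj: "\<forall>x\<in>H. \<forall>y\<in>H. HAdj x y \<longleftrightarrow> f x \<in> W \<and> f y \<in> W \<and> Adj (f x) (f y)"
    unfolding has_induced_copy_def graph_iso_def by blast
  have fV: "f ` H \<subseteq> V" using f \<open>W \<subseteq> V\<close> by (auto simp: bij_betw_def)
  have inj: "inj_on (g \<circ> f) H"
    using f g fV by (auto simp: bij_betw_def intro: comp_inj_on inj_on_subset)
  show thesis
  proof (rule that[OF inj])
    fix x y assume x: "x \<in> H" and y: "y \<in> H" and "x \<noteq> y"
    have "f x \<in> W" "f y \<in> W" using f x y by (auto simp: bij_betw_def)
    then have "HAdj x y \<longleftrightarrow> Adj (f x) (f y)" using f_adj x y by blast
    also have "\<dots> \<longleftrightarrow> div_adj S (g (f x)) (g (f y))" using g_adj fV x y by blast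
    also have "\<dots> \<longleftrightarrow> comparable (dvd) ((g \<circ> f) x) ((g \<circ> f) y)"
      using inj g fV x y \<open>x \<noteq> y\<close>
      by (auto simp: div_adj_def comparable_def bij_betw_def inj_on_def)
    finally show "HAdj x y \<longleftrightarrow> comparable (dvd) ((g \<circ> f) x) ((g \<circ> f) y)" .
  qed
qed

theorem lemma2p1:
  fixes V :: "'a set" and Adj :: "'a \<Rightarrow> 'a \<Rightarrow> bool"
  assumes "simple_graph V Adj"
    and "has_induced_copy (UNIV :: hvert set) H_adj V Adj"
  shows "\<not> divisor_graph V Adj"
proof
  assume "divisor_graph V Adj"
  with assms(2) obtain h :: "hvert \<Rightarrow> nat" where "inj h"
    and "\<And>x y. x \<noteq> y \<Longrightarrow> H_adj x y \<longleftrightarrow> comparable (dvd) (h x) (h y)"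
    by (rule induced_copy_in_divisor_graph) auto
  moreover have "transp ((dvd) :: nat \<Rightarrow> nat \<Rightarrow> bool)" by (rule transpI) (rule dvd_trans)
  moreover have "antisymp ((dvd) :: nat \<Rightarrow> nat \<Rightarrow> bool)" by (rule antisympI) (rule dvd_antisym)
  ultimately show False by (rule H_not_comparability_graph[rotated 2])
qed

end
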